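(* If $H$ is a finite simple connected graph of order at least $4$, then the Cartesian product $K_3 \,\square\, H$ is not well-dominated.
   Context: A graph is well-dominated if every minimal (with respect to inclusion) dominating set is a minimum dominating set. The Cartesian product $G\,\square\, H$ has vertex set $V(G)\times V(H)$, with $(g_1,h_1)$ adjacent to $(g_2,h_2)$ iff either ($g_1=g_2$ and $h_1h_2\in E(H)$) or ($h_1=h_2$ and $g_1g_2\in E(G)$). *)

theory Defs
  imports Main
begin

type_synonym 'a graph = "'a set \<times> ('a \<Rightarrow> 'a \<Rightarrow> bool)"

definition verts :: "'a graph \<Rightarrow> 'a set" where "verts G = fst G"
definition adj :: "'a graph \<Rightarrow> 'a \<Rightarrow> 'a \<Rightarrow> bool" where "adj G = snd G"

definition finite_simple_graph :: "'a graph \<Rightarrow> bool" where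
  "finite_simple_graph G \<longleftrightarrow> finite (verts G)
     \<and> (\<forall>u v. adj G u v \<longrightarrow> u \<in> verts G \<and> v \<in> verts G)
     \<and> (\<forall>u v. adj G u v \<longrightarrow> adj G v u)
     \<and> (\<forall>v. \<not> adj G v v)"

definition connected_graph :: "'a graph \<Rightarrow> bool" where
  "connected_graph G \<longleftrightarrow> verts G \<noteq> {} \<and>
     (\<forall>u\<in>verts G. \<forall>v\<in>verts G. (adj G)\<^sup>*\<^sup>* u v)"

definition dominating_set :: "'a graph \<Rightarrow> 'a set \<Rightarrow> bool" where
  "dominating_set G D \<longleftrightarrow> D \<subseteq> verts G \<and>
     (\<forall>v\<in>verts G. v \<in> D \<or> (\<exists>u\<in>D. adj G u v))"

definition minimal_dominating_set :: "'a graph \<Rightarrow> 'a set \<Rightarrow> bool" where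
  "minimal_dominating_set G D \<longleftrightarrow> dominating_set G D \<and>
     (\<forall>D'. D' \<subset> D \<longrightarrow> \<not> dominating_set G D')"

definition minimum_dominating_set :: "'a graph \<Rightarrow> 'a set \<Rightarrow> bool" where
  "minimum_dominating_set G D \<longleftrightarrow> dominating_set G D \<and>
     (\<forall>D'. dominating_set G D' \<longrightarrow> card D \<le> card D')"

definition well_dominated :: "'a graph \<Rightarrow> bool" where
  "well_dominated G \<longleftrightarrow>
     (\<forall>D. minimal_dominating_set G D \<longrightarrow> minimum_dominating_set G D)"

definition cartesian_product :: "'a graph \<Rightarrow> 'b graph \<Rightarrow> ('a \<times> 'b) graph" where
  "cartesian_product G H =
     (verts G \<times> verts H,
      \<lambda>(g1, h1) (g2, h2). (g1 = g2 \<and> adj H h1 h2) \<or> (h1 = h2 \<and> adj G g1 g2))"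

definition K3 :: "nat graph" where
  "K3 = ({0, 1, 2}, \<lambda>u v. u \<in> {0, 1, 2} \<and> v \<in> {0, 1, 2} \<and> u \<noteq> v)"

end

theory Submission
  imports Defs
begin

(* The layer {0} \<times> V(H) is a minimal dominating set of K3 \<box> H with |V(H)| vertices.
   If H contains a claw with centre v and leaves x, y, z, then replacing the columns over
   v, y, z by the two vertices (1, y), (2, z) still dominates; likewise for a walk a-b-c-d-e
   with b, c, d distinct and a, e outside {b, c, d} (a path P5 or a cycle C4), replacing the
   columns over b, c, d by (1, c), (2, c). This gives a dominating set with |V(H)| - 1
   vertices. A connected graph on at least four vertices containing neither is the path
   a-b-c-d, and there {0,1,2} \<times> {a, d} is a minimal dominating set with 6 > 4 vertices. *)

definition dominated_by :: "'a graph \<Rightarrow> 'a set \<Rightarrow> 'a \<Rightarrow> bool" where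
  "dominated_by G D v \<longleftrightarrow> v \<in> D \<or> (\<exists>u\<in>D. adj G u v)"

lemma dominating_set_iff_dominated_by:
  "dominating_set G D \<longleftrightarrow> D \<subseteq> verts G \<and> (\<forall>v\<in>verts G. dominated_by G D v)"
  by (simp add: dominating_set_def dominated_by_def)

lemma dominated_by_adj: "u \<in> D \<Longrightarrow> adj G u v \<Longrightarrow> dominated_by G D v"
  by (auto simp: dominated_by_def)

lemma dominating_set_mono:
  assumes "dominating_set G D" "D \<subseteq> D'" "D' \<subseteq> verts G"
  shows "dominating_set G D'"
  using assms by (fastforce simp: dominating_set_iff_dominated_by dominated_by_def)

lemma minimal_dominating_setI:
  assumes "dominating_set G D" "\<And>x. x \<in> D \<Longrightarrow> \<not> dominating_set G (D - {x})"
  shows "minimal_dominating_set G D"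
  unfolding minimal_dominating_set_def
proof (intro conjI allI impI notI assms(1))
  fix D' assume "D' \<subset> D" "dominating_set G D'"
  then obtain x where "x \<in> D" "D' \<subseteq> D - {x}" by blast
  moreover have "D - {x} \<subseteq> verts G"
    using assms(1) by (auto simp: dominating_set_def)
  ultimately show False
    using assms(2) dominating_set_mono[OF \<open>dominating_set G D'\<close>] by blast
qed

lemma not_well_dominated_if_smaller_dominating_set:
  assumes "minimal_dominating_set G D" "dominating_set G D'" "card D' < card D"
  shows "\<not> well_dominated G"
  using assms by (fastforce simp: well_dominated_def minimum_dominating_set_def)

lemma finite_simple_graph_adj_sym: "finite_simple_graph H \<Longrightarrow> adj H u v \<Longrightarrow> adj H v u"
  by (simp add: finite_simple_graph_def)

lemma finite_simple_graph_adj_verts: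
  "finite_simple_graph H \<Longrightarrow> adj H u v \<Longrightarrow> u \<in> verts H \<and> v \<in> verts H"
  by (simp add: finite_simple_graph_def)

lemma finite_simple_graph_adj_irrefl: "finite_simple_graph H \<Longrightarrow> adj H u v \<Longrightarrow> u \<noteq> v"
  by (auto simp: finite_simple_graph_def)

lemma connected_graph_edge_leaving:
  assumes "finite_simple_graph H" "connected_graph H"
    and "W \<subseteq> verts H" "W \<noteq> {}" "W \<noteq> verts H"
  obtains u x where "u \<in> W" "x \<in> verts H - W" "adj H u x"
proof -
  obtain w y where "w \<in> W" "y \<in> verts H - W"
    using assms(3-5) by blast
  then have "(adj H)\<^sup>*\<^sup>* w y"
    using assms(2,3) by (auto simp: connected_graph_def)
  then have "y \<in> W \<or> (\<exists>u\<in>W. \<exists>x. x \<notin> W \<and> adj H u x)"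
    by (induction rule: rtranclp_induct) (use \<open>w \<in> W\<close> in blast)+
  then show ?thesis
    using that \<open>y \<in> verts H - W\<close> finite_simple_graph_adj_verts[OF assms(1)] by blast
qed

lemma connected_graph_has_path3:
  assumes H: "finite_simple_graph H" and "connected_graph H" "card (verts H) \<ge> 3"
  obtains p q r where "adj H p q" "adj H q r" "p \<noteq> r"
proof -
  have small_proper: "W \<noteq> verts H" if "card W < 3" for W
    using that assms(3) by auto
  obtain u where "u \<in> verts H"
    using assms(2) by (auto simp: connected_graph_def)
  obtain u' v where "u' \<in> {u}" "v \<in> verts H - {u}" "adj H u' v"
    by (rule connected_graph_edge_leaving[OF H assms(2)])
      (use \<open>u \<in> verts H\<close> small_proper[of "{u}"] in auto)
  obtain y w where "y \<in> {u, v}" "w \<in> verts H - {u, v}" "adj H y w"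
  proof (rule connected_graph_edge_leaving[OF H assms(2)])
    show "{u, v} \<noteq> verts H"
      by (rule small_proper) (simp add: card_insert_if)
  qed (use \<open>u \<in> verts H\<close> \<open>v \<in> verts H - {u}\<close> in auto)
  then show thesis
    using that[of v u w] that[of u v w] \<open>u' \<in> {u}\<close> \<open>adj H u' v\<close>
      finite_simple_graph_adj_sym[OF H] by auto
qed

lemma connected_graph_claw_or_path4:
  assumes H: "finite_simple_graph H" and "connected_graph H" "card (verts H) \<ge> 4"
  obtains (claw) v x y z where "adj H v x" "adj H v y" "adj H v z" "distinct [x, y, z]"
  | (path4) a b c d where "adj H a b" "adj H b c" "adj H c d" "distinct [a, b, c, d]"
proof -
  obtain p q r where pqr: "adj H p q" "adj H q r" "p \<noteq> r"
    by (rule connected_graph_has_path3[OF H assms(2)]) (use assms(3) in linarith)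
  have "p \<noteq> q" "q \<noteq> r"
    using pqr by (simp_all add: finite_simple_graph_adj_irrefl[OF H])
  obtain z x where "z \<in> {p, q, r}" "x \<in> verts H - {p, q, r}" "adj H z x"
  proof (rule connected_graph_edge_leaving[OF H assms(2)])
    show "{p, q, r} \<subseteq> verts H"
      using pqr by (simp add: finite_simple_graph_adj_verts[OF H])
    have "card {p, q, r} \<le> 3"
      by (auto simp: card_insert_if)
    then show "{p, q, r} \<noteq> verts H"
      using assms(3) by auto
  qed simp
  then consider "adj H x p" | "adj H q x" | "adj H r x"
    using finite_simple_graph_adj_sym[OF H] by blast
  then show thesis
    using pqr \<open>p \<noteq> q\<close> \<open>q \<noteq> r\<close> \<open>x \<in> verts H - {p, q, r}\<close>
      claw[of q p r x] path4[of x p q r] path4[of p q r x] finite_simple_graph_adj_sym[OF H]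
    by cases auto
qed

lemma connected_graph_claw_or_walk_or_P4:
  assumes H: "finite_simple_graph H" and "connected_graph H" "card (verts H) \<ge> 4"
  obtains (claw) v x y z where "adj H v x" "adj H v y" "adj H v z" "distinct [x, y, z]"
  | (walk) a b c d e where "adj H a b" "adj H b c" "adj H c d" "adj H d e"
      "b \<noteq> d" "a \<notin> {c, d}" "e \<notin> {b, c}"
  | (P4) a b c d where "verts H = {a, b, c, d}" "distinct [a, b, c, d]"
      "adj H a b" "adj H c d" "\<not> adj H a c" "\<not> adj H b d"
  using assms
proof (cases rule: connected_graph_claw_or_path4)
  case (path4 a b c d)
  have sym: "adj H b a" "adj H c b" "adj H d c"
    using path4(1-3) finite_simple_graph_adj_sym[OF H] by blast+
  consider "adj H a c" | "adj H b d" | "adj H d a"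
    | "\<not> adj H a c" "\<not> adj H b d" "verts H = {a, b, c, d}"
    | "verts H \<noteq> {a, b, c, d}"
    by blast
  then show thesis
  proof cases
    case 1
    then have "adj H c a"
      by (rule finite_simple_graph_adj_sym[OF H])
    with sym path4 show thesis
      by (intro claw[of c b d a]) auto
  next
    case 2
    with sym path4 show thesis
      by (intro claw[of b a c d]) auto
  next
    case 3
    with path4 show thesis
      by (intro walk[of a b c d a]) auto
  next
    case 4
    with path4 show thesis
      by (intro P4[of a b c d]) auto
  next
    case 5
    obtain u x where "u \<in> {a, b, c, d}" "x \<in> verts H - {a, b, c, d}" "adj H u x"
    proof (rule connected_graph_edge_leaving[OF H assms(2) _ _ 5[symmetric]])
      show "{a, b, c, d} \<subseteq> verts H"
        using path4 by (simp add: finite_simple_graph_adj_verts[OF H])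
    qed simp
    then consider "adj H x a" | "adj H b x" | "adj H c x" | "adj H d x"
      using finite_simple_graph_adj_sym[OF H] by blast
    then show thesis
      using sym path4 \<open>x \<in> verts H - {a, b, c, d}\<close>
        claw[of b a c x] claw[of c b d x] walk[of x a b c d] walk[of a b c d x]
      by cases auto
  qed
qed

lemma verts_K3_product: "verts (cartesian_product K3 H) = {0, 1, 2} \<times> verts H"
  by (simp add: cartesian_product_def verts_def K3_def)

lemma adj_K3_product [simp]:
  "adj (cartesian_product K3 H) (i, h) (j, k) \<longleftrightarrow>
     (i = j \<and> adj H h k) \<or> (h = k \<and> i \<in> {0, 1, 2} \<and> j \<in> {0, 1, 2} \<and> i \<noteq> j)"
  by (simp add: cartesian_product_def adj_def K3_def)

lemma K3_product_dominated_by_column: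
  assumes "(j, h) \<in> D" "i \<in> {0, 1, 2}" "j \<in> {0, 1, 2}"
  shows "dominated_by (cartesian_product K3 H) D (i, h)"
proof (cases "i = j")
  case False
  then show ?thesis
    using assms by (intro dominated_by_adj[of "(j, h)"]) auto
qed (use assms in \<open>simp add: dominated_by_def\<close>)

lemma K3_product_dominated_by_neighbour:
  assumes "(i, k) \<in> D" "adj H k h"
  shows "dominated_by (cartesian_product K3 H) D (i, h)"
  using assms by (auto intro: dominated_by_adj[of "(i, k)"])

lemma K3_product_dominated_by_neighbours:
  assumes "(0, k\<^sub>0) \<in> D" "(1, k\<^sub>1) \<in> D" "(2, k\<^sub>2) \<in> D"
    and "adj H k\<^sub>0 h" "adj H k\<^sub>1 h" "adj H k\<^sub>2 h" "i \<in> {0, 1, 2}"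
  shows "dominated_by (cartesian_product K3 H) D (i, h)"
  using assms by (auto intro: K3_product_dominated_by_neighbour)

lemma minimal_dominating_set_K3_product_layer:
  "minimal_dominating_set (cartesian_product K3 H) ({0::nat} \<times> verts H)"
proof (rule minimal_dominating_setI)
  show "dominating_set (cartesian_product K3 H) ({0::nat} \<times> verts H)"
    by (auto simp: dominating_set_iff_dominated_by verts_K3_product
        intro: K3_product_dominated_by_column[of 0])
next
  fix x assume "x \<in> {0::nat} \<times> verts H"
  then obtain h where "x = (0, h)" "h \<in> verts H" by blast
  then have "(1, h) \<in> verts (cartesian_product K3 H)"
    and "\<not> dominated_by (cartesian_product K3 H) ({0::nat} \<times> verts H - {x}) (1, h)"
    by (auto simp: verts_K3_product dominated_by_def)
  then show "\<not> dominating_set (cartesian_product K3 H) ({0::nat} \<times> verts H - {x})"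
    by (auto simp: dominating_set_iff_dominated_by)
qed

lemma not_well_dominated_K3_product_if_layer_replaceable:
  assumes "finite (verts H)" "S \<subseteq> verts H" "T \<subseteq> {0, 1, 2} \<times> verts H" "card T < card S"
    and "\<And>s i. s \<in> S \<Longrightarrow> i \<in> {0, 1, 2} \<Longrightarrow>
           dominated_by (cartesian_product K3 H) ({0::nat} \<times> (verts H - S) \<union> T) (i, s)"
  shows "\<not> well_dominated (cartesian_product K3 H)"
proof (rule not_well_dominated_if_smaller_dominating_set[OF minimal_dominating_set_K3_product_layer])
  let ?D = "{0::nat} \<times> (verts H - S) \<union> T"
  show "dominating_set (cartesian_product K3 H) ?D"
    unfolding dominating_set_iff_dominated_by verts_K3_product
  proof (intro conjI ballI)
    show "?D \<subseteq> {0, 1, 2} \<times> verts H"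
      using assms(3) by blast
    fix v assume "v \<in> {0::nat, 1, 2} \<times> verts H"
    then obtain i h where "v = (i, h)" "i \<in> {0, 1, 2}" "h \<in> verts H" by blast
    then show "dominated_by (cartesian_product K3 H) ?D v"
      using assms(5) K3_product_dominated_by_column[of 0 h ?D i] by (cases "h \<in> S") auto
  qed
  have "finite T"
    using assms(1,3) finite_subset by blast
  then have "card ?D \<le> card (verts H - S) + card T"
    by (metis card_Un_le card_cartesian_product_singleton)
  also have "\<dots> < card (verts H)"
    using assms(1,2,4) card_mono[OF assms(1,2)] by (simp add: card_Diff_subset finite_subset)
  finally show "card ?D < card ({0::nat} \<times> verts H)"
    by (simp add: card_cartesian_product_singleton)
qed

lemma not_well_dominated_K3_product_claw:
  assumes H: "finite_simple_graph H"
    and "adj H v x" "adj H v y" "adj H v z" "distinct [x, y, z]"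
  shows "\<not> well_dominated (cartesian_product K3 H)"
proof (rule not_well_dominated_K3_product_if_layer_replaceable)
  let ?D = "{0::nat} \<times> (verts H - {v, y, z}) \<union> {(1, y), (2, z)}"
  have ne: "v \<noteq> x" "v \<noteq> y" "v \<noteq> z"
    using assms(2-4) by (simp_all add: finite_simple_graph_adj_irrefl[OF H])
  have "v \<in> verts H" "x \<in> verts H" "y \<in> verts H" "z \<in> verts H"
    using assms(2-4) by (simp_all add: finite_simple_graph_adj_verts[OF H])
  with ne show "{v, y, z} \<subseteq> verts H" "{(1, y), (2, z)} \<subseteq> {0, 1, 2} \<times> verts H"
    and "card {(1::nat, y), (2, z)} < card {v, y, z}"
    using assms(5) by auto
  have "(0, x) \<in> ?D" "(1, y) \<in> ?D" "(2, z) \<in> ?D"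
    using \<open>v \<noteq> x\<close> \<open>x \<in> verts H\<close> assms(5) by auto
  moreover have "adj H x v" "adj H y v" "adj H z v"
    using assms(2-4) finite_simple_graph_adj_sym[OF H] by blast+
  ultimately show "dominated_by (cartesian_product K3 H) ?D (i, s)"
    if "s \<in> {v, y, z}" "i \<in> {0, 1, 2}" for s i
    using that K3_product_dominated_by_neighbours[of x ?D y z H v i]
      K3_product_dominated_by_column[of 1 y ?D i H] K3_product_dominated_by_column[of 2 z ?D i H]
    by auto
qed (use H in \<open>simp add: finite_simple_graph_def\<close>)

lemma not_well_dominated_K3_product_walk:
  assumes H: "finite_simple_graph H"
    and "adj H a b" "adj H b c" "adj H c d" "adj H d e" "b \<noteq> d" "a \<notin> {c, d}" "e \<notin> {b, c}"
  shows "\<not> well_dominated (cartesian_product K3 H)"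
proof (rule not_well_dominated_K3_product_if_layer_replaceable)
  let ?D = "{0::nat} \<times> (verts H - {b, c, d}) \<union> {(1, c), (2, c)}"
  have ne: "a \<noteq> b" "b \<noteq> c" "c \<noteq> d" "d \<noteq> e"
    using assms(2-5) by (simp_all add: finite_simple_graph_adj_irrefl[OF H])
  have "a \<in> verts H" "b \<in> verts H" "c \<in> verts H" "d \<in> verts H" "e \<in> verts H"
    using assms(2-5) by (simp_all add: finite_simple_graph_adj_verts[OF H])
  with ne show "{b, c, d} \<subseteq> verts H" "{(1, c), (2, c)} \<subseteq> {0, 1, 2} \<times> verts H"
    and "card {(1::nat, c), (2, c)} < card {b, c, d}"
    using assms(6) by auto
  have "(0, a) \<in> ?D" "(0, e) \<in> ?D" "(1, c) \<in> ?D" "(2, c) \<in> ?D"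
    using ne \<open>a \<in> verts H\<close> \<open>e \<in> verts H\<close> assms(7,8) by auto
  moreover have "adj H a b" "adj H c b" "adj H e d" "adj H c d"
    using assms(2-5) finite_simple_graph_adj_sym[OF H] by blast+
  ultimately show "dominated_by (cartesian_product K3 H) ?D (i, s)"
    if "s \<in> {b, c, d}" "i \<in> {0, 1, 2}" for s i
    using that K3_product_dominated_by_neighbours[of a ?D c c H b i]
      K3_product_dominated_by_neighbours[of e ?D c c H d i]
      K3_product_dominated_by_column[of 1 c ?D i H]
    by auto
qed (use H in \<open>simp add: finite_simple_graph_def\<close>)

lemma not_well_dominated_K3_product_P4:
  assumes H: "finite_simple_graph H"
    and "verts H = {a, b, c, d}" "distinct [a, b, c, d]"
    and "adj H a b" "adj H c d" "\<not> adj H a c" "\<not> adj H b d"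
  shows "\<not> well_dominated (cartesian_product K3 H)"
proof (rule not_well_dominated_if_smaller_dominating_set)
  let ?D = "{0::nat, 1, 2} \<times> {a, d}"
  have "adj H d c" "\<not> adj H d b"
    using assms(5,7) finite_simple_graph_adj_sym[OF H] by blast+
  show "minimal_dominating_set (cartesian_product K3 H) ?D"
  proof (rule minimal_dominating_setI)
    show "dominating_set (cartesian_product K3 H) ?D"
      unfolding dominating_set_iff_dominated_by verts_K3_product
      using assms(2,4) \<open>adj H d c\<close>
      by (auto simp: dominated_by_def intro: K3_product_dominated_by_neighbour)
  next
    fix x assume "x \<in> ?D"
    then obtain i k where "x = (i, k)" "i \<in> {0, 1, 2}" "k \<in> {a, d}" by blast
    \<comment> \<open>(i, b) and (i, c) are private neighbours of (i, a) and (i, d)\<close>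
    then have "\<not> dominated_by (cartesian_product K3 H) (?D - {x}) (i, if k = a then b else c)"
      using assms(3,6) \<open>\<not> adj H d b\<close> by (auto simp: dominated_by_def)
    moreover have "(i, if k = a then b else c) \<in> verts (cartesian_product K3 H)"
      using \<open>i \<in> {0, 1, 2}\<close> assms(2) by (auto simp: verts_K3_product)
    ultimately show "\<not> dominating_set (cartesian_product K3 H) (?D - {x})"
      unfolding dominating_set_iff_dominated_by by blast
  qed
  show "dominating_set (cartesian_product K3 H) ({0} \<times> verts H)"
    using minimal_dominating_set_K3_product_layer[of H] by (simp add: minimal_dominating_set_def)
  show "card ({0} \<times> verts H) < card ?D"
    using assms(2,3) by (simp add: card_cartesian_product)
qed

theorem proposition23:
  fixes H :: "'a graph"
  assumes "finite_simple_graph H"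
    and "connected_graph H"
    and "card (verts H) \<ge> 4"
  shows "\<not> well_dominated (cartesian_product K3 H)"
  using assms
proof (cases rule: connected_graph_claw_or_walk_or_P4)
  case (claw v x y z)
  with assms(1) show ?thesis
    by (rule not_well_dominated_K3_product_claw)
next
  case (walk a b c d e)
  with assms(1) show ?thesis
    by (rule not_well_dominated_K3_product_walk)
next
  case (P4 a b c d)
  with assms(1) show ?thesis
    by (rule not_well_dominated_K3_product_P4)
qed

end
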